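(* Let $q\ge 1$ and let $\rho_{\rm ref}$ be the function defined in the context below. Then: (1) $\rho_{\rm ref}(0)=1$ and $\rho_{\rm ref}(1)=1/2$; (2) $\rho_{\rm ref}'(1)<0$; (3) $\rho_{\rm ref}(\mu)\ge 1/2$ for all $\mu\in[-1,1]$.
   Context: Let $(w_k,t_k)$, $k=1,\dots,q$, be the weights and nodes of the $q$-point Gauss–Legendre quadrature rule on $[-1,1]$. Thus $w_k>0$ and $-1<t_k<1$. The rule is symmetric: whenever $(w_k,t_k)$ is a weight–node pair, so is $(w_k,-t_k)$. It satisfies $\sum_{k=1}^q w_k=2$ and is exact for polynomials of degree at most $2q-1$. For real $\mu$ define $$\rho_{\rm ref}(\mu)=\frac12\sum_{k=1}^q w_k\,\frac{1+\mu s_k}{1+2\mu s_k+\mu^2},\qquad s_k=\sin(\pi t_k/2).$$ Equivalently, $\rho_{\rm ref}$ is the result of applying this quadrature rule to the Cauchy integral $\frac{1}{2\pi\iota}\oint_{|z|=1}\frac{dz}{z-\mu}$ (the indicator of the unit disk), with the circle parametrized by $\phi(t)=e^{\iota\frac{\pi}{2}(1+t)}$ for $-1\le t\le 3$ and the integral folded onto $[-1,1]$. *)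

theory Defs
  imports "HOL-Analysis.Analysis" "HOL-Computational_Algebra.Polynomial"
begin

text \<open>This determines the rule uniquely (it is
  the classical Gauss-Legendre rule). The further standard properties quoted in the
  paper (positive weights, nodes in the open interval, symmetry) are recorded as well;
  they are consequences of the exactness characterization.\<close>

definition gauss_legendre_rule :: "nat \<Rightarrow> (nat \<Rightarrow> real) \<Rightarrow> (nat \<Rightarrow> real) \<Rightarrow> bool" where
  "gauss_legendre_rule q w t \<longleftrightarrow>
     inj_on t {..<q} \<and>
     (\<forall>p :: real poly. degree p \<le> 2 * q - 1 \<longrightarrow>
        (\<Sum>k<q. w k * poly p (t k)) = integral {-1..1} (poly p)) \<and>
     (\<forall>k<q. 0 < w k \<and> -1 < t k \<and> t k < 1) \<and>
     (\<forall>k<q. \<exists>j<q. w j = w k \<and> t j = - t k) \<and>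
     (\<Sum>k<q. w k) = 2"

definition rho_ref :: "nat \<Rightarrow> (nat \<Rightarrow> real) \<Rightarrow> (nat \<Rightarrow> real) \<Rightarrow> real \<Rightarrow> real" where
  "rho_ref q w t \<mu> = 1/2 * (\<Sum>k<q. w k * (1 + \<mu> * sin (pi * t k / 2)) /
        (1 + 2 * \<mu> * sin (pi * t k / 2) + \<mu>^2))"

end

theory Submission
  imports Defs
begin

text \<open>Each node contributes \<open>w\<^sub>k\<close> times \<open>(1 + \<mu> s)/(1 + 2\<mu> s + \<mu>\<^sup>2)\<close> with \<open>\<bar>s\<bar> < 1\<close>.
  This term equals \<open>1/2 + (1 - \<mu>\<^sup>2)/(2(1 + 2\<mu> s + \<mu>\<^sup>2))\<close>, a Poisson-kernel
  correction that vanishes on \<open>\<bar>\<mu>\<bar> = 1\<close> and is nonnegative for \<open>\<bar>\<mu>\<bar> \<le> 1\<close>; the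
  denominator is \<open>(\<mu> + s)\<^sup>2 + 1 - s\<^sup>2 > 0\<close>. Since the weights are positive and sum
  to 2, all three claims follow node by node.\<close>

definition node_term :: "real \<Rightarrow> real \<Rightarrow> real" where
  "node_term s \<mu> = (1 + \<mu> * s) / (1 + 2 * \<mu> * s + \<mu>^2)"

lemma abs_sin_half_pi_less_1:
  fixes x :: real
  assumes "\<bar>x\<bar> < 1"
  shows "\<bar>sin (pi * x / 2)\<bar> < 1"
proof -
  have "\<bar>pi * x\<bar> < pi * 1"
    using mult_strict_left_mono[OF assms pi_gt_zero] by (simp add: abs_mult)
  then have "\<bar>pi * x / 2\<bar> < pi / 2"
    by simp
  then have "cos (pi * x / 2) > 0"
    unfolding abs_less_iff by (intro cos_gt_zero_pi) linarith+
  then have "sin (pi * x / 2)^2 < 1"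
    using sin_cos_squared_add[of "pi * x / 2"] zero_less_power2[of "cos (pi * x / 2)"] by linarith
  then show ?thesis
    by (simp add: abs_square_less_1)
qed

lemma node_term_denominator_pos:
  fixes s \<mu> :: real
  assumes "\<bar>s\<bar> < 1"
  shows "1 + 2 * \<mu> * s + \<mu>^2 > 0"
proof -
  have "1 + 2 * \<mu> * s + \<mu>^2 = (\<mu> + s)^2 + (1 - s^2)"
    by (simp add: power2_eq_square algebra_simps)
  moreover have "s^2 < 1"
    using assms by (simp add: abs_square_less_1)
  ultimately show ?thesis
    by (smt (verit) zero_le_power2)
qed

lemma node_term_minus_half:
  assumes "\<bar>s\<bar> < 1"
  shows "node_term s \<mu> - 1/2 = (1 - \<mu>^2) / (2 * (1 + 2 * \<mu> * s + \<mu>^2))"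
  using node_term_denominator_pos[OF assms, of \<mu>]
  by (simp add: node_term_def field_simps)

lemma node_term_zero [simp]: "node_term s 0 = 1"
  by (simp add: node_term_def)

lemma node_term_one:
  assumes "\<bar>s\<bar> < 1"
  shows "node_term s 1 = 1/2"
  using node_term_minus_half[OF assms, of 1] by simp

lemma node_term_ge_half:
  assumes "\<bar>s\<bar> < 1" and "\<bar>\<mu>\<bar> \<le> 1"
  shows "node_term s \<mu> \<ge> 1/2"
proof -
  have "\<mu>^2 \<le> 1"
    using assms(2) by (simp add: abs_square_le_1)
  then have "(1 - \<mu>^2) / (2 * (1 + 2 * \<mu> * s + \<mu>^2)) \<ge> 0"
    using node_term_denominator_pos[OF assms(1), of \<mu>] by simp
  then show ?thesis
    using node_term_minus_half[OF assms(1), of \<mu>] by linarith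
qed

lemma node_term_has_derivative_at_one:
  assumes "\<bar>s\<bar> < 1"
  shows "(node_term s has_real_derivative - 1 / (2 * (1 + s))) (at 1)"
proof -
  have "1 + s > 0"
    using assms by simp
  have "(node_term s has_real_derivative
      (s * (2 + 2 * s) - (1 + s) * (2 * s + 2)) / (2 + 2 * s)^2) (at 1)"
    unfolding node_term_def using \<open>1 + s > 0\<close>
    by (auto intro!: derivative_eq_intros simp: power2_eq_square algebra_simps)
  moreover have "s * (2 + 2 * s) - (1 + s) * (2 * s + 2) = - (2 + 2 * s)"
    by (simp add: algebra_simps)
  moreover have "- (2 + 2 * s) / (2 + 2 * s)^2 = - 1 / (2 * (1 + s))"
    using \<open>1 + s > 0\<close> by (simp add: power2_eq_square divide_simps)
  ultimately show ?thesis
    by simp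
qed

lemma rho_ref_eq_node_sum:
  "rho_ref q w t = (\<lambda>\<mu>. 1/2 * (\<Sum>k<q. w k * node_term (sin (pi * t k / 2)) \<mu>))"
  by (simp add: rho_ref_def node_term_def fun_eq_iff)

lemma rho_ref_at_zero:
  fixes q :: nat and w t :: "nat \<Rightarrow> real"
  assumes "(\<Sum>k<q. w k) = 2"
  shows "rho_ref q w t 0 = 1"
  using assms by (simp add: rho_ref_eq_node_sum)

lemma rho_ref_at_one:
  fixes q :: nat and w t :: "nat \<Rightarrow> real"
  assumes "(\<Sum>k<q. w k) = 2" and "\<And>k. k < q \<Longrightarrow> \<bar>t k\<bar> < 1"
  shows "rho_ref q w t 1 = 1/2"
proof -
  have "(\<Sum>k<q. w k * node_term (sin (pi * t k / 2)) 1) = (\<Sum>k<q. w k) / 2"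
    using assms(2) by (simp add: node_term_one abs_sin_half_pi_less_1 sum_divide_distrib)
  then show ?thesis
    using assms(1) by (simp add: rho_ref_eq_node_sum)
qed

lemma rho_ref_ge_half:
  fixes q :: nat and w t :: "nat \<Rightarrow> real"
  assumes "(\<Sum>k<q. w k) = 2" and "\<And>k. k < q \<Longrightarrow> w k \<ge> 0"
    and "\<And>k. k < q \<Longrightarrow> \<bar>t k\<bar> < 1" and "\<bar>\<mu>\<bar> \<le> 1"
  shows "rho_ref q w t \<mu> \<ge> 1/2"
proof -
  have "(\<Sum>k<q. w k) / 2 \<le> (\<Sum>k<q. w k * node_term (sin (pi * t k / 2)) \<mu>)"
    unfolding sum_divide_distrib
  proof (intro sum_mono)
    fix k assume "k \<in> {..<q}"
    then have "w k * (1/2) \<le> w k * node_term (sin (pi * t k / 2)) \<mu>"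
      using assms(2-4) by (intro mult_left_mono node_term_ge_half abs_sin_half_pi_less_1) auto
    then show "w k / 2 \<le> w k * node_term (sin (pi * t k / 2)) \<mu>"
      by simp
  qed
  then show ?thesis
    using assms(1) by (simp add: rho_ref_eq_node_sum)
qed

lemma rho_ref_has_derivative_at_one:
  fixes q :: nat and w t :: "nat \<Rightarrow> real"
  assumes "\<And>k. k < q \<Longrightarrow> \<bar>t k\<bar> < 1"
  shows "(rho_ref q w t has_real_derivative
      - 1/4 * (\<Sum>k<q. w k / (1 + sin (pi * t k / 2)))) (at 1)"
proof -
  have "(rho_ref q w t has_real_derivative
      1/2 * (\<Sum>k<q. w k * (- 1 / (2 * (1 + sin (pi * t k / 2)))))) (at 1)"
    unfolding rho_ref_eq_node_sum
    by (intro DERIV_cmult DERIV_sum node_term_has_derivative_at_one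
        abs_sin_half_pi_less_1 assms) simp
  then show ?thesis
    by (simp add: sum_distrib_left sum_negf)
qed

lemma rho_ref_derivative_at_one_neg:
  fixes q :: nat and w t :: "nat \<Rightarrow> real"
  assumes "q \<ge> 1" and "\<And>k. k < q \<Longrightarrow> w k > 0" and "\<And>k. k < q \<Longrightarrow> \<bar>t k\<bar> < 1"
  shows "- 1/4 * (\<Sum>k<q. w k / (1 + sin (pi * t k / 2))) < 0"
proof -
  have "w k / (1 + sin (pi * t k / 2)) > 0" if "k < q" for k
    using assms(2,3)[OF that] abs_sin_half_pi_less_1[of "t k"] by (simp add: abs_less_iff)
  moreover have "0 \<in> {..<q}"
    using assms(1) by simp
  ultimately have "(\<Sum>k<q. w k / (1 + sin (pi * t k / 2))) > 0"
    by (intro sum_pos) auto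
  then show ?thesis
    by simp
qed

theorem theorem1:
  fixes q :: nat and w t :: "nat \<Rightarrow> real"
  assumes "q \<ge> 1"
    and "gauss_legendre_rule q w t"
  shows "rho_ref q w t 0 = 1 \<and> rho_ref q w t 1 = 1/2
    \<and> (\<exists>D. (rho_ref q w t has_real_derivative D) (at 1) \<and> D < 0)
    \<and> (\<forall>\<mu>\<in>{-1..1}. rho_ref q w t \<mu> \<ge> 1/2)"
proof -
  have w_pos: "\<And>k. k < q \<Longrightarrow> w k > 0" and t_abs: "\<And>k. k < q \<Longrightarrow> \<bar>t k\<bar> < 1"
    and w_sum: "(\<Sum>k<q. w k) = 2"
    using assms(2) by (auto simp: gauss_legendre_rule_def abs_less_iff)
  have "rho_ref q w t \<mu> \<ge> 1/2" if "\<mu> \<in> {-1..1}" for \<mu>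
    using that w_pos by (intro rho_ref_ge_half[OF w_sum _ t_abs]) (auto simp: less_imp_le)
  then show ?thesis
    using rho_ref_at_zero[OF w_sum] rho_ref_at_one[where t = t, OF w_sum t_abs]
      rho_ref_has_derivative_at_one[where t = t and w = w, OF t_abs]
      rho_ref_derivative_at_one_neg[where t = t and w = w, OF assms(1) w_pos t_abs]
    by blast
qed

end
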